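(* Let $n\ge 2k\ge 4$. Let $\mathbb{S}$ be a $q$-covering design $\mathcal{C}_2(n-k+1,k,2)$ (a set of $k$-dimensional subspaces of $\mathbb{F}_2^{n-k+1}$ covering every $2$-dimensional subspace), let $U\subseteq\mathbb{F}_2^{n-k+1}$ be an $(n-k)$-dimensional subspace, and let $c=|\{X\in\mathbb{S}: X\subseteq U\}|$. Then $$\mathcal{C}_2(n,k,2)\le 2^{2(n-k)}+(2^k-1)|\mathbb{S}|-(2^k-2)c.$$
   Context: A $q$-covering design $\mathcal{C}_q(n,k,r)$ is a collection of $k$-dimensional subspaces of $\mathbb{F}_q^n$ such that every $r$-dimensional subspace of $\mathbb{F}_q^n$ is contained in at least one member; $\mathcal{C}_q(n,k,r)$ denotes the minimum size of such a collection. *)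

theory Defs
  imports Complex_Main "HOL-Library.Z2" "HOL-Library.Function_Algebras"
begin

text \<open>The field F_2 is the type bit. Vectors of F_2^m are modelled as functions
  nat => bit vanishing outside the coordinates 0..m-1.\<close>

definition scaleF :: "bit \<Rightarrow> (nat \<Rightarrow> bit) \<Rightarrow> (nat \<Rightarrow> bit)" where
  "scaleF c v = (\<lambda>i. c * v i)"

interpretation F2: vector_space scaleF
  by unfold_locales (auto simp: scaleF_def fun_eq_iff algebra_simps)

definition F2n :: "nat \<Rightarrow> (nat \<Rightarrow> bit) set" where
  "F2n m = {v. \<forall>i\<ge>m. v i = 0}"

definition subspace_of_dim :: "nat \<Rightarrow> nat \<Rightarrow> (nat \<Rightarrow> bit) set \<Rightarrow> bool" where
  "subspace_of_dim m k X \<longleftrightarrow> F2.subspace X \<and> X \<subseteq> F2n m \<and> F2.dim X = k"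

definition is_q_covering :: "nat \<Rightarrow> nat \<Rightarrow> nat \<Rightarrow> (nat \<Rightarrow> bit) set set \<Rightarrow> bool" where
  "is_q_covering m k r C \<longleftrightarrow> finite C \<and> (\<forall>X\<in>C. subspace_of_dim m k X) \<and>
     (\<forall>Y. subspace_of_dim m r Y \<longrightarrow> (\<exists>X\<in>C. Y \<subseteq> X))"

definition q_covering_number :: "nat \<Rightarrow> nat \<Rightarrow> nat \<Rightarrow> nat" where
  "q_covering_number m k r = (LEAST s. \<exists>C. is_q_covering m k r C \<and> card C = s)"

end

theory Submission
  imports Defs "HOL-Algebra.Algebraic_Closure_Type"
begin

text \<open>
  Put m = n - k \<ge> k and split
  F_2^n = F_2^k \<oplus> F_2^m into a low part (the first k coordinates) and a high part. A plane Y
  (2-dimensional subspace) is covered by one of two families of k-dimensional blocks: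
  \<^item> if the low parts of a basis y1, y2 of Y are distinct and nonzero, Y lies in the graph of
    a map p \<mapsto> a p + b p^2 from F_2^k \<subseteq> GF(2^m) to GF(2^m) = F_2^m; there are 2^(2m) graphs;
  \<^item> otherwise all low parts of Y lie in {0, p} for some nonzero p, and Y lies in the image of
    the embedding of F_2^(m+1) = U \<oplus> <u0> into F_2^n that maps U onto the high part and u0 to p;
    pushing the given covering design S forward along these 2^k - 1 embeddings covers Y, and
    the c blocks of S inside U have the same image for every p.
  The file first develops F_2-vector spaces of functions nat \<Rightarrow> bit (cardinality 2^dim, the
  low/high splitting, embeddings and how they transport subspaces and coverings), then the field
  GF(2^m) inside the algebraic closure of F_2 with its two-point interpolation property, then the
  two block families and their counting, and finally derives the theorem by arithmetic.
\<close>

text \<open>HOL-Algebra's polynomial indeterminate notation would capture the variable name X.\<close>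

no_notation var (\<open>X\<index>\<close>)

locale bit_vector_space = vector_space "scale :: bit \<Rightarrow> 'b::ab_group_add \<Rightarrow> 'b" for scale
begin

lemma span_insert_bit: "span (insert a B) = span B \<union> (\<lambda>x. a + x) ` span B"
proof -
  have "span (insert a B) = {x. \<exists>c. x - scale c a \<in> span B}"
    by (rule span_insert)
  also have "\<dots> = span B \<union> (\<lambda>x. a + x) ` span B"
  proof (rule Set.set_eqI, rule iffI)
    fix x assume "x \<in> {x. \<exists>c. x - scale c a \<in> span B}"
    then obtain c where c: "x - scale c a \<in> span B" by blast
    show "x \<in> span B \<union> (\<lambda>x. a + x) ` span B"
    proof (cases "c = 0")
      case True with c show ?thesis by simp
    next
      case False
      with c have "x - a \<in> span B" by simp
      then have "a + (x - a) \<in> (\<lambda>x. a + x) ` span B" by blast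
      then show ?thesis by simp
    qed
  next
    fix x assume "x \<in> span B \<union> (\<lambda>x. a + x) ` span B"
    then show "x \<in> {x. \<exists>c. x - scale c a \<in> span B}"
      by (auto intro: exI[of _ 0] exI[of _ 1])
  qed
  finally show ?thesis .
qed

lemma card_span_independent:
  assumes "finite B" "independent B"
  shows "finite (span B) \<and> card (span B) = 2 ^ card B"
  using assms
proof (induction B rule: finite_induct)
  case empty then show ?case by simp
next
  case (insert a B)
  have indep: "independent B" and a: "a \<notin> span B"
    using insert.prems insert.hyps(2) by (auto simp: independent_insert)
  from insert.IH[OF indep] have fin: "finite (span B)" and card: "card (span B) = 2 ^ card B"
    by auto
  have disjoint: "span B \<inter> (\<lambda>x. a + x) ` span B = {}"
  proof (rule ccontr)
    assume "span B \<inter> (\<lambda>x. a + x) ` span B \<noteq> {}"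
    then obtain y where "y \<in> span B" "a + y \<in> span B" by blast
    then have "(a + y) - y \<in> span B" by (intro span_diff)
    with a show False by simp
  qed
  have "card (span (insert a B)) = card (span B) + card ((\<lambda>x. a + x) ` span B)"
    unfolding span_insert_bit using fin disjoint by (intro card_Un_disjoint) auto
  also have "\<dots> = 2 ^ card (insert a B)"
    using card_image[of "\<lambda>x. a + x" "span B"] card insert.hyps by (simp add: inj_on_def)
  finally show ?case using fin by (simp add: span_insert_bit)
qed

lemma card_subspace:
  assumes "subspace V" "finite V"
  shows "card V = 2 ^ dim V"
proof -
  obtain B where B: "B \<subseteq> V" "independent B" "V \<subseteq> span B" "card B = dim V"
    by (rule basis_exists)
  have "finite B" using B(1) assms(2) finite_subset by blast
  moreover have "span B = V" using B span_minimal[OF B(1) assms(1)] by blast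
  ultimately show ?thesis using card_span_independent[OF _ B(2)] B(4) by simp
qed

lemma dim_eq_iff_card:
  assumes "subspace V" "finite V"
  shows "dim V = d \<longleftrightarrow> card V = 2 ^ d"
  using card_subspace[OF assms] by simp

end

interpretation F2: bit_vector_space scaleF ..

lemma bit_add_self [simp]: "(x::bit) + x = 0"
  by (cases x) auto

lemma vec_add_self [simp]: "(v::nat \<Rightarrow> bit) + v = 0"
  by (simp add: fun_eq_iff)

lemma vec_add_cancel [simp]: "(a::nat \<Rightarrow> bit) + (a + b) = b"
  by (simp add: add.assoc[symmetric])

lemma vec_add_cancel' [simp]: "(b::nat \<Rightarrow> bit) + (a + b) = a"
  using vec_add_cancel[of b a] by (simp only: add.commute)

lemma vec_add_cancel_right [simp]: "(x::nat \<Rightarrow> bit) + a + a = x"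
  by (simp add: add.assoc)

lemma vec_add_pair_cancel: "((x::nat \<Rightarrow> bit) + a) + (y + a) = x + y"
  by (metis add.assoc add.commute vec_add_cancel_right)

text \<open>Over F_2 scalar multiplication is trivial, so subspaces are just additive subgroups.\<close>

lemma F2_subspace_iff: "F2.subspace S \<longleftrightarrow> 0 \<in> S \<and> (\<forall>x\<in>S. \<forall>y\<in>S. x + y \<in> S)"
proof -
  have "scaleF c v = 0 \<or> scaleF c v = v" for c v
    by (cases c) (auto simp: scaleF_def fun_eq_iff)
  then show ?thesis unfolding F2.subspace_def by metis
qed

lemma F2n_Suc: "F2n (Suc m) = F2n m \<union> (\<lambda>v. v(m := 1)) ` F2n m"
proof (rule Set.set_eqI, rule iffI)
  fix v assume v: "v \<in> F2n (Suc m)"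
  show "v \<in> F2n m \<union> (\<lambda>v. v(m := 1)) ` F2n m"
  proof (cases "v m = 0")
    case True
    have "v i = 0" if "m \<le> i" for i
      using v True that by (cases "i = m") (auto simp: F2n_def)
    then show ?thesis by (simp add: F2n_def)
  next
    case False
    then have "v = (v(m := 0))(m := 1)" by (auto simp: fun_eq_iff)
    moreover have "v(m := 0) \<in> F2n m" using v by (auto simp: F2n_def)
    ultimately show ?thesis by blast
  qed
qed (auto simp: F2n_def)

lemma F2n_card: "finite (F2n m) \<and> card (F2n m) = 2 ^ m"
proof (induction m)
  case 0
  have "F2n 0 = {0}" by (auto simp: F2n_def fun_eq_iff)
  then show ?case by simp
next
  case (Suc m)
  have disjoint: "F2n m \<inter> (\<lambda>v. v(m := 1)) ` F2n m = {}" by (auto simp: F2n_def)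
  have inj: "inj_on (\<lambda>v. v(m := 1)) (F2n m)"
  proof (rule inj_onI)
    fix v w assume vw: "v \<in> F2n m" "w \<in> F2n m" "v(m := 1) = w(m := 1)"
    have "v i = w i" for i
      using vw by (cases "i = m") (auto simp: F2n_def, metis fun_upd_other)
    then show "v = w" by blast
  qed
  then show ?case unfolding F2n_Suc using Suc disjoint card_image[OF inj]
    by (simp add: card_Un_disjoint)
qed

lemma F2n_finite [simp]: "finite (F2n m)"
  using F2n_card by blast

lemma F2n_zero [simp]: "0 \<in> F2n m" and F2n_add: "x \<in> F2n m \<Longrightarrow> y \<in> F2n m \<Longrightarrow> x + y \<in> F2n m"
  by (auto simp: F2n_def)

lemma F2n_subspace: "F2.subspace (F2n m)"
  by (simp add: F2_subspace_iff F2n_add)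

lemma F2n_mono: "a \<le> b \<Longrightarrow> F2n a \<subseteq> F2n b"
  unfolding F2n_def by auto

lemma dim_F2n: "F2.dim (F2n m) = m"
  using F2.dim_eq_iff_card[OF F2n_subspace F2n_finite] F2n_card by blast

lemma subspace_of_dim_card:
  "subspace_of_dim m d V \<longleftrightarrow> F2.subspace V \<and> V \<subseteq> F2n m \<and> card V = 2 ^ d"
  unfolding subspace_of_dim_def using F2.dim_eq_iff_card finite_subset[OF _ F2n_finite] by blast

lemma plane_basis:
  assumes "subspace_of_dim m 2 Y"
  obtains y1 y2 where "y1 \<noteq> 0" "y2 \<noteq> 0" "y1 \<noteq> y2" "Y = {0, y1, y2, y1 + y2}"
proof -
  have Y: "F2.subspace Y" "finite Y" "card Y = 4"
    using assms subspace_of_dim_card finite_subset[OF _ F2n_finite] by auto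
  then have "card (Y - {0}) = 3" by (simp add: F2_subspace_iff card_Diff_singleton)
  then obtain y1 where y1: "y1 \<in> Y" "y1 \<noteq> 0"
    by (metis Diff_iff card.empty ex_in_conv insertCI zero_neq_numeral)
  with Y have "card (Y - {0, y1}) = 2" by (simp add: F2_subspace_iff card_Diff_subset)
  then obtain y2 where y2: "y2 \<in> Y" "y2 \<noteq> 0" "y2 \<noteq> y1"
    by (metis Diff_iff card.empty ex_in_conv insertCI zero_neq_numeral)
  have sub: "{0, y1, y2, y1 + y2} \<subseteq> Y" using y1 y2 Y(1) by (auto simp: F2_subspace_iff)
  have "y1 + y2 \<notin> {0, y1, y2}"
    using y1 y2 by (metis insertE singletonD vec_add_cancel vec_add_cancel' vec_add_self)
  then have "card {0, y1, y2, y1 + y2} = card Y" using y1 y2 Y(3) by auto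
  then have "Y = {0, y1, y2, y1 + y2}" using card_subset_eq[OF Y(2) sub] by simp
  with y1 y2 that show thesis by blast
qed

text \<open>F_2^(k+m) splits as F_2^k \<oplus> F_2^m: a vector y is its low part (coordinates below k)
  plus the shift by k of its high part.\<close>

definition low :: "nat \<Rightarrow> (nat \<Rightarrow> bit) \<Rightarrow> (nat \<Rightarrow> bit)" where
  "low k y = (\<lambda>i. if i < k then y i else 0)"

definition high :: "nat \<Rightarrow> (nat \<Rightarrow> bit) \<Rightarrow> (nat \<Rightarrow> bit)" where
  "high k y = (\<lambda>i. y (i + k))"

definition shift :: "nat \<Rightarrow> (nat \<Rightarrow> bit) \<Rightarrow> (nat \<Rightarrow> bit)" where
  "shift k w = (\<lambda>i. if k \<le> i then w (i - k) else 0)"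

lemma shift_add: "shift k (v + w) = shift k v + shift k w"
  by (auto simp: shift_def fun_eq_iff)

lemma low_add: "low k (v + w) = low k v + low k w"
  by (auto simp: low_def fun_eq_iff)

lemma low_in: "low k y \<in> F2n k"
  by (auto simp: low_def F2n_def)

lemma high_in: "y \<in> F2n (k + m) \<Longrightarrow> high k y \<in> F2n m"
  by (auto simp: high_def F2n_def)

lemma low_high_decomp: "low k y + shift k (high k y) = y"
  by (auto simp: low_def shift_def high_def fun_eq_iff)

lemma low_split: "p \<in> F2n k \<Longrightarrow> low k (p + shift k w) = p"
  by (auto simp: low_def shift_def F2n_def fun_eq_iff)

lemma high_split: "p \<in> F2n k \<Longrightarrow> high k (p + shift k w) = w"
  by (auto simp: high_def shift_def F2n_def fun_eq_iff)

lemma split_in: "p \<in> F2n k \<Longrightarrow> w \<in> F2n m \<Longrightarrow> p + shift k w \<in> F2n (k + m)"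
  by (auto simp: shift_def F2n_def)

text \<open>An injective F_2-linear map from F_2^a into F_2^b (over F_2, linear = additive).\<close>

definition F2_embedding :: "nat \<Rightarrow> nat \<Rightarrow> ((nat \<Rightarrow> bit) \<Rightarrow> (nat \<Rightarrow> bit)) \<Rightarrow> bool" where
  "F2_embedding a b T \<longleftrightarrow> (\<forall>x\<in>F2n a. \<forall>y\<in>F2n a. T (x + y) = T x + T y)
     \<and> inj_on T (F2n a) \<and> T ` F2n a \<subseteq> F2n b"

lemma embedding_zero: "F2_embedding a b T \<Longrightarrow> T 0 = 0"
  unfolding F2_embedding_def by (metis F2n_zero add_0 vec_add_self)

lemma embedding_image_dim:
  assumes T: "F2_embedding a b T" and V: "subspace_of_dim a d V"
  shows "subspace_of_dim b d (T ` V)"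
proof -
  have V': "F2.subspace V" "V \<subseteq> F2n a" "card V = 2 ^ d"
    using V subspace_of_dim_card by auto
  have "F2.subspace (T ` V)"
    unfolding F2_subspace_iff
  proof (intro conjI ballI)
    show "0 \<in> T ` V" using V'(1) embedding_zero[OF T] by (metis F2_subspace_iff image_eqI)
  next
    fix u v assume "u \<in> T ` V" "v \<in> T ` V"
    then obtain x y where xy: "x \<in> V" "y \<in> V" "u = T x" "v = T y" by blast
    then have "u + v = T (x + y)" using T V'(2) unfolding F2_embedding_def by (metis subsetD)
    moreover have "x + y \<in> V" using xy V'(1) by (simp add: F2_subspace_iff)
    ultimately show "u + v \<in> T ` V" by blast
  qed
  moreover have "T ` V \<subseteq> F2n b" using T V'(2) unfolding F2_embedding_def by blast
  moreover have "card (T ` V) = 2 ^ d"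
    using T V' card_image inj_on_subset by (metis F2_embedding_def)
  ultimately show ?thesis using subspace_of_dim_card by blast
qed

text \<open>If a covering design of F_2^a is pushed forward along an embedding T, its images
  cover every r-dimensional subspace lying in the image of T: pull such a subspace back
  along T, cover it there, and push the covering block forward again.\<close>

lemma embedding_cover:
  assumes T: "F2_embedding a b T" and S: "is_q_covering a k r S"
    and Y: "subspace_of_dim b r Y" and Y_img: "Y \<subseteq> T ` F2n a"
  shows "\<exists>V\<in>S. Y \<subseteq> T ` V"
proof -
  define Z where "Z = {x \<in> F2n a. T x \<in> Y}"
  have image: "T ` Z = Y" using Y_img by (auto simp: Z_def)
  have inj: "inj_on T Z" using T by (auto simp: F2_embedding_def Z_def intro: inj_on_subset)
  have "F2.subspace Z"
    using Y embedding_zero[OF T] T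
    by (auto simp: Z_def F2_subspace_iff subspace_of_dim_card F2_embedding_def F2n_add)
  moreover have "card Z = 2 ^ r"
    using card_image[OF inj] image Y subspace_of_dim_card by simp
  ultimately have "subspace_of_dim a r Z" by (auto simp: subspace_of_dim_card Z_def)
  then obtain V where "V \<in> S" "Z \<subseteq> V" using S by (auto simp: is_q_covering_def)
  with image show ?thesis by blast
qed

lemma card_roots_no_double_root:
  fixes p :: "'a::alg_closed_field poly"
  assumes "p \<noteq> 0" and "\<And>x. \<not> [:-x, 1:] ^ 2 dvd p"
  shows "card {x. poly p x = 0} = degree p"
  using assms
proof (induction "degree p" arbitrary: p rule: less_induct)
  case (less p)
  show ?case
  proof (cases "degree p = 0")
    case True
    then obtain c where "p = [:c:]" by (elim degree_eq_zeroE)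
    with less.prems True show ?thesis by simp
  next
    case False
    then obtain x where "poly p x = 0" using alg_closed_imp_poly_has_root by blast
    then obtain q where p: "p = [:-x, 1:] * q" using poly_eq_0_iff_dvd by (blast elim: dvdE)
    have "q \<noteq> 0" using less.prems(1) p by auto
    then have deg: "degree p = Suc (degree q)" unfolding p by (subst degree_mult_eq) auto
    have "q dvd p" unfolding p by (rule dvd_triv_right)
    then have "\<not> [:-y, 1:] ^ 2 dvd q" for y
      using less.prems(2)[of y] dvd_trans by blast
    then have IH: "card {y. poly q y = 0} = degree q"
      using less.hyps[of q] deg \<open>q \<noteq> 0\<close> by simp
    have "poly q x \<noteq> 0"
    proof
      assume "poly q x = 0"
      then have "[:-x, 1:] dvd q" using poly_eq_0_iff_dvd by blast
      then have "[:-x, 1:] ^ 2 dvd p" unfolding p power2_eq_square by (rule mult_dvd_mono[OF dvd_refl])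
      with less.prems(2) show False by blast
    qed
    moreover have "{y. poly p y = 0} = insert x {y. poly q y = 0}" by (auto simp: p)
    ultimately show ?thesis using IH poly_roots_finite[OF \<open>q \<noteq> 0\<close>] deg by simp
  qed
qed

lemma no_double_root_if_pderiv_const:
  fixes p :: "'a::field poly"
  assumes "pderiv p = [:c:]" "c \<noteq> 0"
  shows "\<not> [:-x, 1:] ^ 2 dvd p"
proof
  assume "[:-x, 1:] ^ 2 dvd p"
  then obtain h where h: "p = [:-x, 1:] ^ 2 * h" by (elim dvdE)
  have "poly (pderiv p) x = 0"
    unfolding h power2_eq_square pderiv_mult poly_add poly_mult by simp
  with assms show False by simp
qed

type_synonym F2bar = "bit alg_closure"

definition scaleL :: "bit \<Rightarrow> F2bar \<Rightarrow> F2bar" where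
  "scaleL c x = to_ac c * x"

interpretation F2bar: bit_vector_space scaleL
proof unfold_locales
  fix a b :: bit and x y :: F2bar
  show "scaleL a (x + y) = scaleL a x + scaleL a y" by (simp add: scaleL_def distrib_left)
  show "scaleL (a + b) x = scaleL a x + scaleL b x"
    unfolding scaleL_def to_ac_add by (rule distrib_right)
  show "scaleL a (scaleL b x) = scaleL (a * b) x"
    unfolding scaleL_def to_ac_mult by (simp add: mult.assoc)
  show "scaleL 1 x = x" by (simp add: scaleL_def)
qed

lemma F2bar_two [simp]: "(2::F2bar) = 0"
  by (metis bit_2_eq_0 to_ac_0 to_ac_numeral)

lemma F2bar_add_self [simp]: "(x::F2bar) + x = 0"
  by (metis F2bar_two mult_2 mult_zero_left)

lemma F2bar_square_add: "((x::F2bar) + y) ^ 2 = x ^ 2 + y ^ 2"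
proof -
  have "(x + y) ^ 2 = x ^ 2 + y ^ 2 + 2 * x * y" by (simp add: power2_eq_square algebra_simps)
  then show ?thesis by simp
qed

lemma F2bar_frobenius: "((x::F2bar) + y) ^ (2 ^ j) = x ^ (2 ^ j) + y ^ (2 ^ j)"
proof (induction j)
  case (Suc j)
  have "(x + y) ^ (2 ^ Suc j) = ((x + y) ^ (2 ^ j)) ^ 2" by (simp add: power_mult[symmetric] mult.commute)
  also have "\<dots> = (x ^ (2 ^ j)) ^ 2 + (y ^ (2 ^ j)) ^ 2" using Suc F2bar_square_add by simp
  also have "\<dots> = x ^ (2 ^ Suc j) + y ^ (2 ^ Suc j)" by (simp add: power_mult[symmetric] mult.commute)
  finally show ?case .
qed simp

text \<open>The field GF(2^m): the fixed points of the m-th power of Frobenius.\<close>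

definition GF :: "nat \<Rightarrow> F2bar set" where
  "GF m = {x. x ^ (2 ^ m) = x}"

lemma GF_zero [simp]: "0 \<in> GF m"
  by (simp add: GF_def)

lemma GF_add: "x \<in> GF m \<Longrightarrow> y \<in> GF m \<Longrightarrow> x + y \<in> GF m"
  by (simp add: GF_def F2bar_frobenius)

lemma GF_mult: "x \<in> GF m \<Longrightarrow> y \<in> GF m \<Longrightarrow> x * y \<in> GF m"
  by (simp add: GF_def power_mult_distrib)

lemma GF_subspace: "F2bar.subspace (GF m)"
proof -
  have "to_ac c = 0 \<or> to_ac c = 1" for c :: bit by (cases c) auto
  then show ?thesis
    unfolding F2bar.subspace_def scaleL_def using GF_add GF_mult by (metis GF_zero mult_zero_left mult_1)
qed

text \<open>GF(2^m) is the root set of X^(2^m) - X, which is separable since its derivative is -1.\<close>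

lemma card_GF:
  assumes "1 \<le> m"
  shows "finite (GF m) \<and> card (GF m) = 2 ^ m"
proof -
  define P :: "F2bar poly" where "P = monom 1 (2 ^ m) - [:0, 1:]"
  have roots: "GF m = {x. poly P x = 0}" by (simp add: P_def GF_def poly_monom)
  have "(2::nat) ^ m \<ge> 2 ^ 1" using assms by (intro power_increasing) auto
  then have "(2::nat) ^ m > 1" by simp
  then have deg: "degree P = 2 ^ m"
    unfolding P_def diff_conv_add_uminus
    by (subst degree_add_eq_left) (simp_all add: degree_monom_eq)
  then have "P \<noteq> 0" by auto
  moreover have "pderiv P = [:-1:]"
    using assms by (cases m) (simp_all add: P_def pderiv_monom pderiv_diff pderiv_pCons)
  ultimately have "card (GF m) = 2 ^ m"
    using card_roots_no_double_root[of P] no_double_root_if_pderiv_const[of P "-1"] deg roots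
    by simp
  then show ?thesis using card.infinite by fastforce
qed

lemma dim_GF: "1 \<le> m \<Longrightarrow> F2bar.dim (GF m) = m"
  using F2bar.dim_eq_iff_card[OF GF_subspace] card_GF by blast

lemma GF_curve: "a \<in> GF m \<Longrightarrow> b \<in> GF m \<Longrightarrow> g \<in> GF m \<Longrightarrow> a * g + b * g ^ 2 \<in> GF m"
  by (simp add: GF_add GF_mult power2_eq_square)

text \<open>Through two points with distinct nonzero abscissae g1, g2 of GF(2^m) passes exactly one
  curve z = a g + b g^2 with a, b in GF(2^m); uniqueness holds in every field, and existence
  in GF(2^m) follows since an injective self-map of a finite set is onto.\<close>

lemma linearised_interpolation_unique:
  fixes g1 g2 a b a' b' :: "'a::field"
  assumes "g1 \<noteq> 0" "g2 \<noteq> 0" "g1 \<noteq> g2"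
    and "a * g1 + b * g1 ^ 2 = a' * g1 + b' * g1 ^ 2"
    and "a * g2 + b * g2 ^ 2 = a' * g2 + b' * g2 ^ 2"
  shows "a = a' \<and> b = b'"
proof -
  have "(a - a' + (b - b') * g1) * g1 = 0" "(a - a' + (b - b') * g2) * g2 = 0"
    using assms(4,5) by (simp_all add: algebra_simps power2_eq_square)
  then have h: "a - a' + (b - b') * g1 = 0" "a - a' + (b - b') * g2 = 0"
    using assms(1,2) by simp_all
  have "(b - b') * (g1 - g2) = (a - a' + (b - b') * g1) - (a - a' + (b - b') * g2)"
    by (simp add: algebra_simps)
  also have "\<dots> = 0" by (simp only: h diff_self)
  finally have "(b - b') * (g1 - g2) = 0" .
  then have "b = b'" using assms(3) by simp
  with h show ?thesis by simp
qed

lemma GF_interpolation: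
  assumes "1 \<le> m" and g: "g1 \<in> GF m" "g2 \<in> GF m" "g1 \<noteq> 0" "g2 \<noteq> 0" "g1 \<noteq> g2"
    and z: "z1 \<in> GF m" "z2 \<in> GF m"
  shows "\<exists>a\<in>GF m. \<exists>b\<in>GF m. a * g1 + b * g1 ^ 2 = z1 \<and> a * g2 + b * g2 ^ 2 = z2"
proof -
  define \<Phi> where "\<Phi> = (\<lambda>(a, b). (a * g1 + b * g1 ^ 2, a * g2 + b * g2 ^ 2))"
  have "inj_on \<Phi> (GF m \<times> GF m)"
  proof (rule inj_onI)
    fix u v assume e: "\<Phi> u = \<Phi> v"
    obtain a b a' b' where uv: "u = (a, b)" "v = (a', b')" by (cases u, cases v)
    with e have "a * g1 + b * g1 ^ 2 = a' * g1 + b' * g1 ^ 2"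
      "a * g2 + b * g2 ^ 2 = a' * g2 + b' * g2 ^ 2" by (simp_all add: \<Phi>_def)
    then show "u = v" using linearised_interpolation_unique[OF g(3-5)] uv by blast
  qed
  moreover have "\<Phi> ` (GF m \<times> GF m) \<subseteq> GF m \<times> GF m"
    using g(1,2) by (auto simp: \<Phi>_def intro: GF_curve)
  moreover have "finite (GF m \<times> GF m)" using card_GF[OF assms(1)] by simp
  ultimately have "\<Phi> ` (GF m \<times> GF m) = GF m \<times> GF m" by (simp add: endo_inj_surj)
  with z have "(z1, z2) \<in> \<Phi> ` (GF m \<times> GF m)" by simp
  then obtain ab where ab: "ab \<in> GF m \<times> GF m" "(z1, z2) = \<Phi> ab" by (rule imageE)
  obtain a b where "ab = (a, b)" by (cases ab)
  with ab have "a \<in> GF m" "b \<in> GF m" "a * g1 + b * g1 ^ 2 = z1" "a * g2 + b * g2 ^ 2 = z2"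
    by (simp_all add: \<Phi>_def)
  then show ?thesis by blast
qed

lemma (in vector_space_pair) linear_iso_of_equal_dim:
  assumes "vs1.subspace S" "vs2.subspace T" "finite S" "finite T" "vs1.dim S = vs2.dim T"
  shows "\<exists>f. Vector_Spaces.linear s1 s2 f \<and> bij_betw f S T"
proof -
  obtain B where B: "B \<subseteq> S" "vs1.independent B" "S \<subseteq> vs1.span B" "card B = vs1.dim S"
    by (rule vs1.basis_exists)
  obtain C where C: "C \<subseteq> T" "vs2.independent C" "T \<subseteq> vs2.span C" "card C = vs2.dim T"
    by (rule vs2.basis_exists)
  have "finite B" "finite C" using B(1) C(1) assms(3,4) finite_subset by blast+
  from finite_basis_to_basis_subspace_isomorphism[OF assms(1,2,5) this(1) B this(2) C]
  show ?thesis by (auto simp: bij_betw_def)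
qed

interpretation F2_F2: vector_space_pair scaleF scaleF ..
interpretation F2_F2bar: vector_space_pair scaleF scaleL ..

text \<open>The first family of blocks: graphs of the maps p \<mapsto> a p + b p^2 (computed in GF(2^m)
  after identifying F_2^m with GF(2^m) via \<theta>) restricted to F_2^k \<subseteq> F_2^m. A 2-dimensional
  subspace whose low parts span a plane is the graph of a unique such map.\<close>

locale graph_family =
  fixes k m :: nat and \<theta> :: "(nat \<Rightarrow> bit) \<Rightarrow> F2bar"
  assumes k_le_m: "k \<le> m" and m_pos: "1 \<le> m"
    and \<theta>_add: "\<theta> (x + y) = \<theta> x + \<theta> y"
    and \<theta>_bij: "bij_betw \<theta> (F2n m) (GF m)"
begin

definition coord :: "F2bar \<Rightarrow> nat \<Rightarrow> bit" where
  "coord = inv_into (F2n m) \<theta>"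

lemma \<theta>_in: "w \<in> F2n m \<Longrightarrow> \<theta> w \<in> GF m"
  using \<theta>_bij bij_betwE by blast

lemma coord_in: "z \<in> GF m \<Longrightarrow> coord z \<in> F2n m"
  unfolding coord_def using \<theta>_bij bij_betw_inv_into_right bij_betw_imp_surj_on inv_into_into
  by metis

lemma \<theta>_coord: "z \<in> GF m \<Longrightarrow> \<theta> (coord z) = z"
  unfolding coord_def using \<theta>_bij bij_betw_inv_into_right by metis

lemma coord_\<theta>: "w \<in> F2n m \<Longrightarrow> coord (\<theta> w) = w"
  unfolding coord_def using \<theta>_bij bij_betw_inv_into_left by metis

lemma \<theta>_zero [simp]: "\<theta> 0 = 0"
  using \<theta>_add[of 0 0] by simp

lemma \<theta>_inj: "x \<in> F2n m \<Longrightarrow> y \<in> F2n m \<Longrightarrow> \<theta> x = \<theta> y \<Longrightarrow> x = y"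
  using \<theta>_bij by (auto simp: bij_betw_def dest: inj_onD)

lemma coord_add: "z1 \<in> GF m \<Longrightarrow> z2 \<in> GF m \<Longrightarrow> coord (z1 + z2) = coord z1 + coord z2"
  by (metis F2n_add \<theta>_add \<theta>_coord coord_\<theta> coord_in)

definition graph_map :: "F2bar \<Rightarrow> F2bar \<Rightarrow> (nat \<Rightarrow> bit) \<Rightarrow> (nat \<Rightarrow> bit)" where
  "graph_map a b p = p + shift k (coord (a * \<theta> p + b * \<theta> p ^ 2))"

definition graph_space :: "F2bar \<Rightarrow> F2bar \<Rightarrow> (nat \<Rightarrow> bit) set" where
  "graph_space a b = graph_map a b ` F2n k"

lemma low_in_F2n_m: "low k y \<in> F2n m"
  using low_in F2n_mono[OF k_le_m] by blast

text \<open>The map is additive because squaring is additive in characteristic 2.\<close>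

lemma graph_map_embedding:
  assumes ab: "a \<in> GF m" "b \<in> GF m"
  shows "F2_embedding k (k + m) (graph_map a b)"
  unfolding F2_embedding_def
proof (intro conjI ballI)
  fix p q assume pq: "p \<in> F2n k" "q \<in> F2n k"
  then have pq_m: "p \<in> F2n m" "q \<in> F2n m" using F2n_mono[OF k_le_m] by auto
  have "a * \<theta> (p + q) + b * \<theta> (p + q) ^ 2
      = (a * \<theta> p + b * \<theta> p ^ 2) + (a * \<theta> q + b * \<theta> q ^ 2)"
    by (simp add: \<theta>_add F2bar_square_add algebra_simps)
  then have "coord (a * \<theta> (p + q) + b * \<theta> (p + q) ^ 2)
      = coord (a * \<theta> p + b * \<theta> p ^ 2) + coord (a * \<theta> q + b * \<theta> q ^ 2)"
    using ab pq_m by (simp add: coord_add GF_curve \<theta>_in)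
  then show "graph_map a b (p + q) = graph_map a b p + graph_map a b q"
    unfolding graph_map_def by (simp add: shift_add add_ac)
next
  show "inj_on (graph_map a b) (F2n k)"
    by (rule inj_onI) (metis graph_map_def low_split)
  show "graph_map a b ` F2n k \<subseteq> F2n (k + m)"
    using ab F2n_mono[OF k_le_m]
    by (auto simp: graph_map_def intro!: split_in coord_in GF_curve \<theta>_in)
qed

lemma graph_space_dim:
  assumes "a \<in> GF m" "b \<in> GF m"
  shows "subspace_of_dim (k + m) k (graph_space a b)"
proof -
  have "subspace_of_dim k k (F2n k)" by (simp add: subspace_of_dim_card F2n_subspace F2n_card)
  then show ?thesis
    unfolding graph_space_def by (rule embedding_image_dim[OF graph_map_embedding[OF assms]])
qed

lemma graph_space_through:
  assumes y: "y1 \<in> F2n (k + m)" "y2 \<in> F2n (k + m)"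
    and low: "low k y1 \<noteq> 0" "low k y2 \<noteq> 0" "low k y1 \<noteq> low k y2"
  shows "\<exists>a\<in>GF m. \<exists>b\<in>GF m. y1 \<in> graph_space a b \<and> y2 \<in> graph_space a b"
proof -
  define g1 g2 where "g1 = \<theta> (low k y1)" and "g2 = \<theta> (low k y2)"
  have g: "g1 \<in> GF m" "g2 \<in> GF m" "g1 \<noteq> 0" "g2 \<noteq> 0" "g1 \<noteq> g2"
    unfolding g1_def g2_def using low \<theta>_inj[OF low_in_F2n_m low_in_F2n_m] \<theta>_inj[OF _ F2n_zero]
    by (auto intro: \<theta>_in low_in_F2n_m)
  have z: "\<theta> (high k y1) \<in> GF m" "\<theta> (high k y2) \<in> GF m"
    using y by (auto intro: \<theta>_in high_in)
  obtain a b where ab: "a \<in> GF m" "b \<in> GF m"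
    "a * g1 + b * g1 ^ 2 = \<theta> (high k y1)" "a * g2 + b * g2 ^ 2 = \<theta> (high k y2)"
    using GF_interpolation[OF m_pos g z] by blast
  have "graph_map a b (low k y1) = y1" "graph_map a b (low k y2) = y2"
    using ab(3,4) y by (simp_all add: graph_map_def g1_def g2_def coord_\<theta> high_in low_high_decomp)
  then have "y1 \<in> graph_space a b" "y2 \<in> graph_space a b"
    unfolding graph_space_def using low_in by (metis image_eqI)+
  with ab(1,2) show ?thesis by blast
qed

end

text \<open>The second family of blocks: write F_2^(m+1) = U \<oplus> <u0> and embed it into F_2^(k+m) by
  sending U onto the high part (via \<psi>) and u0 to a nonzero low vector p. The image consists
  of the vectors whose low part is 0 or p, and on U the embedding does not depend on p.\<close>

locale lift_family =
  fixes k m :: nat and U :: "(nat \<Rightarrow> bit) set" and u0 :: "nat \<Rightarrow> bit"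
    and \<psi> :: "(nat \<Rightarrow> bit) \<Rightarrow> (nat \<Rightarrow> bit)"
  assumes U: "subspace_of_dim (Suc m) m U"
    and u0: "u0 \<in> F2n (Suc m)" "u0 \<notin> U"
    and \<psi>_add: "\<psi> (x + y) = \<psi> x + \<psi> y"
    and \<psi>_bij: "bij_betw \<psi> U (F2n m)"
begin

lemma U_add: "x \<in> U \<Longrightarrow> y \<in> U \<Longrightarrow> x + y \<in> U"
  using U by (simp add: subspace_of_dim_card F2_subspace_iff)

lemma U_in: "U \<subseteq> F2n (Suc m)"
  using U by (simp add: subspace_of_dim_card)

lemma not_in_U_add: "x \<in> U \<Longrightarrow> y \<notin> U \<Longrightarrow> x + y \<notin> U"
  using U_add[of x "x + y"] by auto

lemma hyperplane:
  assumes "x \<in> F2n (Suc m)" "x \<notin> U"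
  shows "x + u0 \<in> U"
proof -
  define C where "C = (\<lambda>u. u0 + u) ` U"
  have fin: "finite U" using finite_subset[OF U_in F2n_finite] .
  have "u0 + u \<notin> U" if "u \<in> U" for u
    using not_in_U_add[OF that u0(2)] by (simp add: add.commute)
  then have disjoint: "U \<inter> C = {}" by (auto simp: C_def)
  have sub: "U \<union> C \<subseteq> F2n (Suc m)" using U_in u0(1) by (auto simp: C_def intro: F2n_add)
  have "card U = 2 ^ m" using U by (simp add: subspace_of_dim_card)
  moreover have "card C = card U" unfolding C_def by (rule card_image) (simp add: inj_on_def)
  ultimately have "card (U \<union> C) = card (F2n (Suc m))"
    using card_Un_disjoint[OF fin _ disjoint] fin F2n_card[of "Suc m"] by (simp add: C_def)
  then have "U \<union> C = F2n (Suc m)" using card_subset_eq[OF F2n_finite sub] by blast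
  with assms obtain u where "u \<in> U" "x = u0 + u" by (auto simp: C_def)
  then show ?thesis by (metis add.commute vec_add_cancel)
qed

definition lift :: "(nat \<Rightarrow> bit) \<Rightarrow> (nat \<Rightarrow> bit) \<Rightarrow> (nat \<Rightarrow> bit)" where
  "lift p x = (if x \<in> U then shift k (\<psi> x) else p + shift k (\<psi> (x + u0)))"

text \<open>The lift is additive; the case of two vectors outside U uses the hyperplane property.\<close>

lemma lift_add:
  assumes "x \<in> F2n (Suc m)" "y \<in> F2n (Suc m)"
  shows "lift p (x + y) = lift p x + lift p y"
proof (cases "x \<in> U"; cases "y \<in> U")
  assume "x \<in> U" "y \<in> U"
  then show ?thesis by (simp add: lift_def U_add \<psi>_add shift_add)
next
  assume "x \<in> U" "y \<notin> U"
  then show ?thesis by (simp add: lift_def not_in_U_add \<psi>_add shift_add add_ac)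
next
  assume "x \<notin> U" "y \<in> U"
  then have "y + x \<notin> U" by (rule not_in_U_add[rotated])
  with \<open>x \<notin> U\<close> \<open>y \<in> U\<close> show ?thesis by (simp add: lift_def \<psi>_add shift_add add_ac)
next
  assume xy: "x \<notin> U" "y \<notin> U"
  then have "x + y \<in> U"
    using assms hyperplane U_add vec_add_pair_cancel[of x u0 y] by metis
  moreover have "\<psi> (x + y) = \<psi> (x + u0) + \<psi> (y + u0)"
    by (simp add: \<psi>_add[symmetric] vec_add_pair_cancel)
  moreover have "(p + a) + (p + b) = a + b" for a b
    using vec_add_pair_cancel[of a p b] by (simp add: add.commute)
  ultimately show ?thesis using xy by (simp add: lift_def shift_add)
qed

text \<open>For p \<noteq> 0 the low part of lift p x records whether x \<in> U, so lift p is injective.\<close>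

lemma lift_embedding:
  assumes p: "p \<in> F2n k" "p \<noteq> 0"
  shows "F2_embedding (Suc m) (k + m) (lift p)"
  unfolding F2_embedding_def
proof (intro conjI ballI)
  fix x y assume "x \<in> F2n (Suc m)" "y \<in> F2n (Suc m)"
  then show "lift p (x + y) = lift p x + lift p y" by (rule lift_add)
next
  have parts: "low k (lift p x) = (if x \<in> U then 0 else p)"
    "high k (lift p x) = \<psi> (if x \<in> U then x else x + u0)" for x
    using p(1) low_split[of 0 k] high_split[of 0 k] by (simp_all add: lift_def low_split high_split)
  show "inj_on (lift p) (F2n (Suc m))"
  proof (rule inj_onI)
    fix x y assume xy: "x \<in> F2n (Suc m)" "y \<in> F2n (Suc m)" "lift p x = lift p y"
    then have "(x \<in> U) = (y \<in> U)" using parts(1)[of x] parts(1)[of y] p(2) by (auto split: if_splits)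
    moreover have "\<psi> (if x \<in> U then x else x + u0) = \<psi> (if y \<in> U then y else y + u0)"
      using parts(2)[of x] parts(2)[of y] xy(3) by simp
    ultimately show "x = y"
      using \<psi>_bij hyperplane xy(1,2) by (auto simp: bij_betw_def dest: inj_onD split: if_splits)
  qed
next
  have "\<psi> x \<in> F2n m" if "x \<in> U" for x using that \<psi>_bij bij_betwE by blast
  then show "lift p ` F2n (Suc m) \<subseteq> F2n (k + m)"
    using p(1) hyperplane split_in[of 0 k] by (auto simp: lift_def intro: split_in)
qed

lemma lift_on_U: "x \<in> U \<Longrightarrow> lift p x = shift k (\<psi> x)"
  by (simp add: lift_def)

lemma lift_image:
  assumes "p \<in> F2n k" "y \<in> F2n (k + m)" "low k y = 0 \<or> low k y = p"
  shows "y \<in> lift p ` F2n (Suc m)"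
proof -
  define u where "u = inv_into U \<psi> (high k y)"
  have u: "u \<in> U" "\<psi> u = high k y"
    unfolding u_def using \<psi>_bij high_in[OF assms(2)]
    by (metis bij_betw_imp_surj_on inv_into_into bij_betw_inv_into_right)+
  show ?thesis
  proof (cases "low k y = 0")
    case True
    then have "lift p u = y" using u low_high_decomp[of k y] by (simp add: lift_on_U)
    then show ?thesis using u(1) U_in by blast
  next
    case False
    then have "low k y = p" using assms(3) by blast
    have "u + u0 \<notin> U" using not_in_U_add[OF u(1) u0(2)] .
    then have "lift p (u + u0) = y"
      using u low_high_decomp[of k y] \<open>low k y = p\<close> by (simp add: lift_def del: vec_add_self)
    moreover have "u + u0 \<in> F2n (Suc m)" using u(1) U_in u0(1) F2n_add by blast
    ultimately show ?thesis by blast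
  qed
qed

end

lemma plane_low_parts:
  assumes Y: "subspace_of_dim n 2 Y" and k: "1 \<le> k"
  obtains (graph) y1 y2 where "Y = {0, y1, y2, y1 + y2}"
      "low k y1 \<noteq> 0" "low k y2 \<noteq> 0" "low k y1 \<noteq> low k y2"
    | (lift) p where "p \<in> F2n k" "p \<noteq> 0" "\<forall>y\<in>Y. low k y = 0 \<or> low k y = p"
proof -
  obtain y1 y2 where Y_eq: "Y = {0, y1, y2, y1 + y2}" using plane_basis[OF Y] .
  show thesis
  proof (cases "low k y1 \<noteq> 0 \<and> low k y2 \<noteq> 0 \<and> low k y1 \<noteq> low k y2")
    case True
    then show ?thesis using graph Y_eq by blast
  next
    case False
    define e :: "nat \<Rightarrow> bit" where "e = (\<lambda>i. if i = 0 then 1 else 0)"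
    define p where
      "p = (if low k y1 \<noteq> 0 then low k y1 else if low k y2 \<noteq> 0 then low k y2 else e)"
    have "e \<in> F2n k" "e \<noteq> 0" using k by (auto simp: e_def F2n_def fun_eq_iff)
    then have "p \<in> F2n k" "p \<noteq> 0" by (auto simp: p_def low_in)
    moreover have "\<forall>y\<in>Y. low k y = 0 \<or> low k y = p"
      using False by (auto simp: Y_eq p_def low_add low_def[of k 0])
    ultimately show ?thesis by (rule lift)
  qed
qed

locale construction = graph_family k m \<theta> + lift_family k m U u0 \<psi>
  for k m \<theta> U u0 \<psi> +
  fixes S :: "(nat \<Rightarrow> bit) set set"
  assumes k_pos: "1 \<le> k" and S: "is_q_covering (Suc m) k 2 S"
begin

definition graph_blocks :: "(nat \<Rightarrow> bit) set set" where
  "graph_blocks = (\<lambda>(a, b). graph_space a b) ` (GF m \<times> GF m)"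

definition lift_blocks :: "(nat \<Rightarrow> bit) set set" where
  "lift_blocks = (\<Union>p \<in> F2n k - {0}. (\<lambda>V. lift p ` V) ` S)"

lemma blocks_dim:
  assumes "V \<in> graph_blocks \<union> lift_blocks"
  shows "subspace_of_dim (k + m) k V"
proof -
  have "subspace_of_dim (k + m) k (lift p ` V)" if "p \<in> F2n k - {0}" "V \<in> S" for p V
    using that embedding_image_dim[OF lift_embedding] S by (auto simp: is_q_covering_def)
  moreover have "subspace_of_dim (k + m) k (graph_space a b)" if "(a, b) \<in> GF m \<times> GF m" for a b
    using that graph_space_dim by simp
  ultimately show ?thesis using assms unfolding graph_blocks_def lift_blocks_def by auto
qed

lemma blocks_cover:
  assumes Y: "subspace_of_dim (k + m) 2 Y"
  shows "\<exists>V\<in>graph_blocks \<union> lift_blocks. Y \<subseteq> V"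
proof -
  have Y_sub: "Y \<subseteq> F2n (k + m)" using Y by (simp add: subspace_of_dim_card)
  from Y k_pos show ?thesis
  proof (cases rule: plane_low_parts)
    case (graph y1 y2)
    have "y1 \<in> F2n (k + m)" "y2 \<in> F2n (k + m)" using graph(1) Y_sub by auto
    then obtain a b where ab: "a \<in> GF m" "b \<in> GF m" "y1 \<in> graph_space a b" "y2 \<in> graph_space a b"
      using graph_space_through graph(2-4) by blast
    then have "Y \<subseteq> graph_space a b"
      using graph_space_dim[OF ab(1,2)] graph(1) by (auto simp: subspace_of_dim_card F2_subspace_iff)
    moreover have "graph_space a b \<in> graph_blocks" using ab(1,2) by (auto simp: graph_blocks_def)
    ultimately show ?thesis by blast
  next
    case (lift p)
    then have "Y \<subseteq> lift p ` F2n (Suc m)" using lift_image[OF lift(1)] Y_sub by blast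
    then obtain V where "V \<in> S" "Y \<subseteq> lift p ` V"
      using embedding_cover[OF lift_embedding[OF lift(1,2)] S Y] by blast
    moreover have "lift p ` V \<in> lift_blocks" using lift(1,2) \<open>V \<in> S\<close> by (auto simp: lift_blocks_def)
    ultimately show ?thesis by blast
  qed
qed

lemma blocks_covering: "is_q_covering (k + m) k 2 (graph_blocks \<union> lift_blocks)"
proof -
  have "finite (graph_blocks \<union> lift_blocks)"
    using card_GF[OF m_pos] S by (simp add: graph_blocks_def lift_blocks_def is_q_covering_def)
  then show ?thesis using blocks_dim blocks_cover by (simp add: is_q_covering_def)
qed

lemma card_graph_blocks: "card graph_blocks \<le> 2 ^ m * 2 ^ m"
  unfolding graph_blocks_def
  using card_image_le[of "GF m \<times> GF m"] card_GF[OF m_pos] by (simp add: card_cartesian_product)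

text \<open>Blocks of S inside U are mapped to the same block by every lift p, so they are counted
  only once; this is the saving of (2^k - 2) c in the bound.\<close>

lemma card_lift_blocks:
  defines "SU \<equiv> {V \<in> S. V \<subseteq> U}"
  shows "card lift_blocks \<le> card SU + (2 ^ k - 1) * (card S - card SU)"
proof -
  define P where "P = F2n k - {0}"
  have fin_S: "finite S" and fin_SU: "finite SU" and SU_S: "SU \<subseteq> S"
    using S by (auto simp: is_q_covering_def SU_def)
  define W1 where "W1 = (\<lambda>V. shift k ` \<psi> ` V) ` SU"
  define W2 where "W2 = (\<Union>p\<in>P. (\<lambda>V. lift p ` V) ` (S - SU))"
  have "lift_blocks \<subseteq> W1 \<union> W2"
  proof
    fix W assume "W \<in> lift_blocks"
    then obtain p V where pV: "p \<in> P" "V \<in> S" "W = lift p ` V" by (auto simp: lift_blocks_def P_def)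
    show "W \<in> W1 \<union> W2"
    proof (cases "V \<in> SU")
      case True
      then have "V \<subseteq> U" by (simp add: SU_def)
      then have "lift p ` V = (\<lambda>x. shift k (\<psi> x)) ` V" using lift_on_U by (intro image_cong) auto
      then have "W = shift k ` \<psi> ` V" using pV(3) by (simp add: image_image)
      with True show ?thesis by (simp add: W1_def)
    qed (use pV in \<open>auto simp: W2_def\<close>)
  qed
  moreover have "finite W1" "finite W2" using fin_S fin_SU by (simp_all add: W1_def W2_def P_def)
  ultimately have "card lift_blocks \<le> card W1 + card W2"
    using card_mono[of "W1 \<union> W2" lift_blocks] card_Un_le[of W1 W2] by simp
  also have "\<dots> \<le> card SU + (\<Sum>p\<in>P. card ((\<lambda>V. lift p ` V) ` (S - SU)))"
    unfolding W1_def W2_def by (intro add_mono card_image_le card_UN_le fin_SU) (simp add: P_def)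
  also have "\<dots> \<le> card SU + (\<Sum>p\<in>P. card (S - SU))"
    using fin_S by (intro add_mono sum_mono card_image_le) auto
  also have "\<dots> = card SU + card P * (card S - card SU)"
    using card_Diff_subset[OF fin_SU SU_S] by simp
  also have "card P = 2 ^ k - 1" using F2n_card[of k] by (simp add: P_def card_Diff_singleton)
  finally show ?thesis .
qed

end

lemma GF_coordinates:
  assumes "1 \<le> m"
  obtains \<theta> where "\<And>x y. \<theta> (x + y) = \<theta> x + \<theta> y" "bij_betw \<theta> (F2n m) (GF m)"
proof -
  have fin: "finite (GF m)" using card_GF[OF assms] by blast
  have "F2.dim (F2n m) = F2bar.dim (GF m)" using dim_F2n dim_GF[OF assms] by simp
  then obtain \<theta> where "Vector_Spaces.linear scaleF scaleL \<theta>" "bij_betw \<theta> (F2n m) (GF m)"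
    using F2_F2bar.linear_iso_of_equal_dim[OF F2n_subspace GF_subspace F2n_finite fin] by blast
  moreover from this(1) have "\<theta> (x + y) = \<theta> x + \<theta> y" for x y by (rule F2_F2bar.linear_add)
  ultimately show thesis using that by blast
qed

lemma hyperplane_coordinates:
  assumes U: "subspace_of_dim (Suc m) m U"
  obtains u0 \<psi> where "u0 \<in> F2n (Suc m)" "u0 \<notin> U"
    "\<And>x y. \<psi> (x + y) = \<psi> x + \<psi> y" "bij_betw \<psi> U (F2n m)"
proof -
  have U_sub: "U \<subseteq> F2n (Suc m)" and U_card: "card U = 2 ^ m"
    using U by (simp_all add: subspace_of_dim_card)
  have fin: "finite U" using finite_subset[OF U_sub F2n_finite] .
  have "\<not> F2n (Suc m) \<subseteq> U"
  proof
    assume "F2n (Suc m) \<subseteq> U"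
    then have "card (F2n (Suc m)) \<le> card U" by (rule card_mono[OF fin])
    then show False using F2n_card[of "Suc m"] U_card by simp
  qed
  then obtain u0 where u0: "u0 \<in> F2n (Suc m)" "u0 \<notin> U" by blast
  have U_space: "F2.subspace U" and "F2.dim U = F2.dim (F2n m)"
    using U dim_F2n by (simp_all add: subspace_of_dim_def)
  then obtain \<psi> where "Vector_Spaces.linear scaleF scaleF \<psi>" "bij_betw \<psi> U (F2n m)"
    using F2_F2.linear_iso_of_equal_dim[OF U_space F2n_subspace fin F2n_finite] by blast
  moreover from this(1) have "\<psi> (x + y) = \<psi> x + \<psi> y" for x y by (rule F2_F2.linear_add)
  ultimately show thesis using that u0 by blast
qed

theorem covering_from_smaller_design:
  assumes "1 \<le> k" "k \<le> m" and S: "is_q_covering (Suc m) k 2 S"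
    and U: "subspace_of_dim (Suc m) m U"
  shows "\<exists>C. is_q_covering (k + m) k 2 C \<and>
    card C \<le> 2 ^ m * 2 ^ m + card {V \<in> S. V \<subseteq> U} + (2 ^ k - 1) * (card S - card {V \<in> S. V \<subseteq> U})"
proof -
  have m: "1 \<le> m" using assms(1,2) by simp
  obtain \<theta> where \<theta>: "\<And>x y. \<theta> (x + y) = \<theta> x + \<theta> y" "bij_betw \<theta> (F2n m) (GF m)"
    using GF_coordinates[OF m] by blast
  obtain u0 \<psi> where u0: "u0 \<in> F2n (Suc m)" "u0 \<notin> U"
    and \<psi>: "\<And>x y. \<psi> (x + y) = \<psi> x + \<psi> y" "bij_betw \<psi> U (F2n m)"
    using hyperplane_coordinates[OF U] by blast
  interpret construction k m \<theta> U u0 \<psi> S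
    by unfold_locales (use assms m \<theta> u0 \<psi> in auto)
  have "card (graph_blocks \<union> lift_blocks) \<le> card graph_blocks + card lift_blocks"
    by (rule card_Un_le)
  then show ?thesis using blocks_covering card_graph_blocks card_lift_blocks by fastforce
qed

lemma q_covering_number_le: "is_q_covering n k r C \<Longrightarrow> q_covering_number n k r \<le> card C"
  unfolding q_covering_number_def by (rule Least_le) blast

theorem mainTheorem10:
  fixes n k c :: nat and S :: "(nat \<Rightarrow> bit) set set" and U :: "(nat \<Rightarrow> bit) set"
  assumes "2 \<le> k" and "2 * k \<le> n"
    and "is_q_covering (n - k + 1) k 2 S"
    and "subspace_of_dim (n - k + 1) (n - k) U"
    and "c = card {X \<in> S. X \<subseteq> U}"
  shows "int (q_covering_number n k 2)
           \<le> 2 ^ (2 * (n - k)) + (2 ^ k - 1) * int (card S) - (2 ^ k - 2) * int c"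
proof -
  define m where "m = n - k"
  have "n = k + m" "n - k + 1 = Suc m" "k \<le> m" using assms(1,2) by (auto simp: m_def)
  then obtain C where C: "is_q_covering n k 2 C"
    "card C \<le> 2 ^ m * 2 ^ m + c + (2 ^ k - 1) * (card S - c)"
    using covering_from_smaller_design[of k m S U] assms by auto
  have "c \<le> card S" using assms(3,5) by (auto simp: is_q_covering_def intro: card_mono)
  have "q_covering_number n k 2 \<le> 2 ^ m * 2 ^ m + c + (2 ^ k - 1) * (card S - c)"
    using q_covering_number_le[OF C(1)] C(2) by linarith
  then have "int (q_covering_number n k 2) \<le> int (2 ^ m * 2 ^ m + c + (2 ^ k - 1) * (card S - c))"
    by (simp only: of_nat_le_iff)
  also have "\<dots> = 2 ^ (2 * m) + int c + (2 ^ k - 1) * (int (card S) - int c)"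
    using \<open>c \<le> card S\<close> by (simp add: of_nat_diff power_add[symmetric] mult_2)
  finally show ?thesis by (simp add: m_def algebra_simps)
qed

end
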